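(* Let $L_0,\ldots,L_{m-1}$ be Laplacian matrices of non-negatively weighted digraphs on the node set $\{1,\ldots,N\}$, $N\ge2$. Let $\bar{\Delta}=[\mathbf{1}_{N-1},\,-I_{N-1}]\in\mathbb{R}^{(N-1)\times N}$ and $\Delta=\begin{bmatrix}1&0_{1\times(N-1)}\\ \mathbf{1}_{N-1}&-I_{N-1}\end{bmatrix}$ (so that $\Delta\Delta=I_N$). For each $j$ write $\Delta L_j\Delta=\begin{bmatrix}0&*\\0&\tilde{L}_j\end{bmatrix}$ with $\tilde{L}_j\in\mathbb{R}^{(N-1)\times(N-1)}$. If the digraph whose Laplacian is $\sum_{j=0}^{m-1}L_j$ contains a directed spanning tree, then $$\bigcap_{j=0}^{m-1}\mathrm{Eig}(\tilde{L}_j)=\{\mathbf{0}\},$$ where $\mathrm{Eig}(M)$ denotes the subspace spanned by the generalized eigenvectors of $M$ associated with the eigenvalue $0$.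
   Context: A weighted digraph on $\{1,\ldots,N\}$ has adjacency matrix $W=[a_{ij}]$ with $a_{ij}\ge0$, $a_{ii}=0$, and $a_{ij}>0$ iff $(j,i)$ is an edge; its Laplacian is $L=\mathrm{diag}\{\sum_j a_{1j},\ldots,\sum_j a_{Nj}\}-W$, so $L\mathbf{1}_N=0$. A digraph contains a directed spanning tree if some node has a directed path (sequence of edges $(i_1,i_2),(i_2,i_3),\ldots$) to every other node. A generalized eigenvector of $M$ for eigenvalue $\lambda$ is a nonzero $v$ with $(M-\lambda I)^qv=0$ for some positive integer $q$. *)

theory Defs
  imports "Jordan_Normal_Form.Matrix"
begin

text \<open>Adjacency matrices of non-negatively weighted digraphs on nodes 0..N-1
  (paper: 1..N). Entry (i,j) positive iff (j,i) is an edge.\<close>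
definition is_adjacency :: "nat \<Rightarrow> real mat \<Rightarrow> bool" where
  "is_adjacency N W \<longleftrightarrow> W \<in> carrier_mat N N \<and>
     (\<forall>i<N. \<forall>j<N. W $$ (i,j) \<ge> 0) \<and> (\<forall>i<N. W $$ (i,i) = 0)"

definition laplacian_of :: "nat \<Rightarrow> real mat \<Rightarrow> real mat" where
  "laplacian_of N W = mat N N (\<lambda>(i,j). (if i = j then (\<Sum>k<N. W $$ (i,k)) else 0)) - W"

definition is_laplacian :: "nat \<Rightarrow> real mat \<Rightarrow> bool" where
  "is_laplacian N L \<longleftrightarrow> (\<exists>W. is_adjacency N W \<and> L = laplacian_of N W)"

definition adjacency_of_laplacian :: "nat \<Rightarrow> real mat \<Rightarrow> real mat" where
  "adjacency_of_laplacian N L = mat N N (\<lambda>(i,j). if i = j then 0 else - L $$ (i,j))"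

definition digraph_edges :: "nat \<Rightarrow> real mat \<Rightarrow> (nat \<times> nat) set" where
  "digraph_edges N W = {(j,i). i < N \<and> j < N \<and> W $$ (i,j) > 0}"

definition has_spanning_tree :: "nat \<Rightarrow> real mat \<Rightarrow> bool" where
  "has_spanning_tree N W \<longleftrightarrow> (\<exists>r<N. \<forall>k<N. k \<noteq> r \<longrightarrow> (r,k) \<in> (digraph_edges N W)\<^sup>+)"

definition Delta_mat :: "nat \<Rightarrow> real mat" where
  "Delta_mat N = mat N N (\<lambda>(i,k). if i = 0 then (if k = 0 then 1 else 0)
                                  else (if k = 0 then 1 else if k = i then -1 else 0))"

definition reduced_laplacian :: "nat \<Rightarrow> real mat \<Rightarrow> real mat" where
  "reduced_laplacian N L =
     (let P = Delta_mat N * L * Delta_mat N in mat (N-1) (N-1) (\<lambda>(i,k). P $$ (i+1,k+1)))"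

definition gen_eigenvector :: "real mat \<Rightarrow> real \<Rightarrow> real vec \<Rightarrow> bool" where
  "gen_eigenvector M lam v \<longleftrightarrow> v \<in> carrier_vec (dim_row M) \<and> v \<noteq> 0\<^sub>v (dim_row M) \<and>
     (\<exists>q>0. ((M - lam \<cdot>\<^sub>m 1\<^sub>m (dim_row M)) ^\<^sub>m q) *\<^sub>v v = 0\<^sub>v (dim_row M))"

definition vec_span :: "nat \<Rightarrow> real vec set \<Rightarrow> real vec set" where
  "vec_span n S = {v. \<exists>vs cs. length cs = length vs \<and> set vs \<subseteq> S \<and>
       v = foldr (+) (map2 (\<lambda>c w. c \<cdot>\<^sub>v w) cs vs) (0\<^sub>v n)}"

definition Eig :: "real mat \<Rightarrow> real vec set" where
  "Eig M = vec_span (dim_row M) {v. gen_eigenvector M 0 v}"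

end

theory Submission
  imports Defs "Jordan_Normal_Form.Matrix_Kernel"
begin

text \<open>
  Write (L x) i = \<Sum>k. w i k * (x i - x k) for the Laplacian of non-negative weights w.
  A discrete maximum principle gives two facts. First, 0 is a semisimple eigenvalue of L:
  if y = L x and L y = 0, the maximisers of y are closed under out-edges, so at a maximiser
  of y that minimises x among them, (L x) i \<le> 0; hence max y \<le> 0, and symmetrically
  min y \<ge> 0. Second, if L x = 0 and the digraph has a spanning tree, x is constant: its
  maximisers are closed under in-edges and thus contain the root, and so do its minimisers.

  For v of length N - 1 let z = (0, v). The reduced Laplacian satisfies
  (L' v) i = (L z) (i + 1) - (L z) 0, so L' v = 0 makes L z constant, whence L (L z) = 0
  and L z = 0 by semisimplicity; the same argument shows that L' (L' v) = 0 forces L' v = 0,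
  so Eig(L') is the kernel of L'. A v in all these kernels makes z harmonic for every L j,
  hence for their sum, whose digraph has a spanning tree; so z is constant, and z 0 = 0.
\<close>

lemma mat_kernel_add:
  assumes "A \<in> carrier_mat nr nc" "v \<in> mat_kernel A" "w \<in> mat_kernel A"
  shows "v + w \<in> mat_kernel A"
proof -
  have "v \<in> carrier_vec nc" "w \<in> carrier_vec nc" "A *\<^sub>v v = 0\<^sub>v nr" "A *\<^sub>v w = 0\<^sub>v nr"
    using mat_kernelD[OF assms(1)] assms(2,3) by auto
  then show ?thesis
    using mult_add_distrib_mat_vec[OF assms(1)] by (intro mat_kernelI[OF assms(1)]) auto
qed

lemma vec_span_subset_mat_kernel:
  assumes A: "A \<in> carrier_mat nr nc" and "S \<subseteq> mat_kernel A"
  shows "vec_span nc S \<subseteq> mat_kernel A"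
proof
  fix v assume "v \<in> vec_span nc S"
  then obtain vs cs where "length cs = length vs" "set vs \<subseteq> mat_kernel A"
    and v: "v = foldr (+) (map2 (\<lambda>c w. c \<cdot>\<^sub>v w) cs vs) (0\<^sub>v nc)"
    using assms(2) unfolding vec_span_def by blast
  then show "v \<in> mat_kernel A"
  proof (induction vs arbitrary: cs v)
    case Nil
    then show ?case using A by (auto intro!: mat_kernelI[OF A])
  next
    case (Cons w vs)
    then obtain c cs' where cs: "cs = c # cs'" "length cs' = length vs" by (cases cs) auto
    have "foldr (+) (map2 (\<lambda>c w. c \<cdot>\<^sub>v w) cs' vs) (0\<^sub>v nc) \<in> mat_kernel A"
      using Cons.IH[OF cs(2) _ refl] Cons.prems(2) by simp
    moreover have "c \<cdot>\<^sub>v w \<in> mat_kernel A" using mat_kernel_smult[OF A] Cons.prems(2) by simp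
    ultimately show ?case using mat_kernel_add[OF A] Cons.prems(3) cs(1) by simp
  qed
qed

lemma gen_eigenvector_0_mat_kernel:
  assumes R: "R \<in> carrier_mat n n"
    and square_kernel: "\<And>v. v \<in> carrier_vec n \<Longrightarrow> R *\<^sub>v (R *\<^sub>v v) = 0\<^sub>v n \<Longrightarrow> R *\<^sub>v v = 0\<^sub>v n"
    and "gen_eigenvector R 0 v"
  shows "v \<in> mat_kernel R"
proof -
  have pow: "R *\<^sub>v v = 0\<^sub>v n" if "v \<in> carrier_vec n" "(R ^\<^sub>m Suc p) *\<^sub>v v = 0\<^sub>v n" for p v
    using that
  proof (induction p arbitrary: v)
    case 0
    then show ?case using R by simp
  next
    case (Suc p)
    have "R ^\<^sub>m Suc p \<in> carrier_mat n n" using R by (intro carrier_matI) auto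
    then have "(R ^\<^sub>m Suc p) *\<^sub>v (R *\<^sub>v v) = 0\<^sub>v n"
      using assoc_mult_mat_vec[OF _ R Suc.prems(1)] Suc.prems(2) by simp
    then have "R *\<^sub>v (R *\<^sub>v v) = 0\<^sub>v n" using Suc.IH[of "R *\<^sub>v v"] Suc.prems(1) R by simp
    then show ?case by (rule square_kernel[OF Suc.prems(1)])
  qed
  have dim: "dim_row R = n" using R by simp
  have R0: "R - 0 \<cdot>\<^sub>m 1\<^sub>m n = R" using R by (intro eq_matI) auto
  from assms(3) obtain q where "q > 0" "(R ^\<^sub>m q) *\<^sub>v v = 0\<^sub>v n" and v: "v \<in> carrier_vec n"
    unfolding gen_eigenvector_def dim R0 by blast
  then have "R *\<^sub>v v = 0\<^sub>v n" using pow[of v "q - 1"] by simp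
  then show ?thesis using mat_kernelI[OF R v] by simp
qed

lemma zero_mem_Eig: "0\<^sub>v (dim_row M) \<in> Eig M"
  unfolding Eig_def vec_span_def by (auto intro!: exI[of _ "[]"])

definition laplacian_apply :: "real mat \<Rightarrow> nat \<Rightarrow> (nat \<Rightarrow> real) \<Rightarrow> nat \<Rightarrow> real" where
  "laplacian_apply W N x i = (\<Sum>k<N. W $$ (i,k) * (x i - x k))"

lemma laplacian_apply_uminus:
  "laplacian_apply W N (\<lambda>k. - x k) = (\<lambda>i. - laplacian_apply W N x i)"
  unfolding laplacian_apply_def by (rule ext) (simp add: sum_negf[symmetric] algebra_simps)

lemma laplacian_apply_shift:
  assumes "\<forall>k<N. x k = y k + c" "i < N"
  shows "laplacian_apply W N x i = laplacian_apply W N y i"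
  unfolding laplacian_apply_def using assms by (intro sum.cong) auto

lemma laplacian_apply_const:
  assumes "\<forall>k<N. x k = c" "i < N"
  shows "laplacian_apply W N x i = 0"
  using laplacian_apply_shift[of N x "\<lambda>_. 0" c] assms by (simp add: laplacian_apply_def)

lemma laplacian_apply_sum:
  assumes "i < N"
  shows "laplacian_apply (mat N N (\<lambda>(i,k). \<Sum>j<m. W j $$ (i,k))) N x i
       = (\<Sum>j<m. laplacian_apply (W j) N x i)"
  unfolding laplacian_apply_def using assms
  by (simp add: sum_distrib_right sum.swap[of _ "{..<m}"])

lemma harmonic_max_out_neighbour_eq:
  assumes "\<forall>k<N. W $$ (i,k) \<ge> 0" "\<forall>k<N. x k \<le> x i" "laplacian_apply W N x i = 0"
    and "k < N" "W $$ (i,k) > 0"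
  shows "x k = x i"
proof -
  have "\<forall>k\<in>{..<N}. W $$ (i,k) * (x i - x k) \<ge> 0" using assms(1,2) by simp
  then have "\<forall>k\<in>{..<N}. W $$ (i,k) * (x i - x k) = 0"
    using assms(3) sum_nonneg_eq_0_iff[of "{..<N}" "\<lambda>k. W $$ (i,k) * (x i - x k)"]
    unfolding laplacian_apply_def by blast
  then show ?thesis using assms(4,5) by (metis lessThan_iff less_irrefl mult_eq_0_iff right_minus_eq)
qed

lemma laplacian_square_zero_nonpos:
  assumes W: "\<forall>i<N. \<forall>k<N. W $$ (i,k) \<ge> 0"
    and harm: "\<forall>i<N. laplacian_apply W N (laplacian_apply W N x) i = 0"
    and "i < N"
  shows "laplacian_apply W N x i \<le> 0"
proof -
  define y where "y = laplacian_apply W N x"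
  define M where "M = Max (y ` {..<N})"
  have y_le_M: "\<forall>k<N. y k \<le> M" unfolding M_def by simp
  define S where "S = {k. k < N \<and> y k = M}"
  have "finite S" "S \<noteq> {}"
    using Max_in[of "y ` {..<N}"] \<open>i < N\<close> unfolding S_def M_def by fastforce+
  then have "Min (x ` S) \<in> x ` S" by (intro Min_in) auto
  then obtain i0 where i0: "i0 \<in> S" "x i0 = Min (x ` S)" by auto
  have i0_N: "i0 < N" and y_i0: "y i0 = M" using i0(1) unfolding S_def by auto
  have "W $$ (i0,k) * (x i0 - x k) \<le> 0" if k: "k < N" for k
  proof (cases "W $$ (i0,k) > 0")
    case True
    then have "y k = y i0"
      using harmonic_max_out_neighbour_eq[of N W i0 y k] W i0_N y_le_M y_i0 harm k
      unfolding y_def by auto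
    then have "k \<in> S" using k y_i0 unfolding S_def by auto
    then have "x i0 \<le> x k" using i0(2) \<open>finite S\<close> by simp
    then show ?thesis using True by (simp add: mult_nonneg_nonpos)
  next
    case False
    then have "W $$ (i0,k) = 0" using W i0_N k by (meson linorder_neqE_linordered_idom not_le)
    then show ?thesis by simp
  qed
  then have "M \<le> 0"
    using y_i0 sum_nonpos[of "{..<N}" "\<lambda>k. W $$ (i0,k) * (x i0 - x k)"]
    unfolding y_def laplacian_apply_def by simp
  then show ?thesis using y_le_M \<open>i < N\<close> unfolding y_def by fastforce
qed

lemma laplacian_square_zero_imp_zero:
  assumes "\<forall>i<N. \<forall>k<N. W $$ (i,k) \<ge> 0"
    and "\<forall>i<N. laplacian_apply W N (laplacian_apply W N x) i = 0"
    and "i < N"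
  shows "laplacian_apply W N x i = 0"
proof -
  have "\<forall>i<N. laplacian_apply W N (laplacian_apply W N (\<lambda>k. - x k)) i = 0"
    using assms(2) by (simp add: laplacian_apply_uminus)
  from laplacian_square_zero_nonpos[OF assms(1) this assms(3)]
  have "- laplacian_apply W N x i \<le> 0" by (simp add: laplacian_apply_uminus)
  then show ?thesis using laplacian_square_zero_nonpos[OF assms] by simp
qed

lemma harmonic_le_root:
  assumes W: "\<forall>i<N. \<forall>k<N. W $$ (i,k) \<ge> 0"
    and harm: "\<forall>i<N. laplacian_apply W N x i = 0"
    and r: "r < N" "\<forall>k<N. k \<noteq> r \<longrightarrow> (r,k) \<in> (digraph_edges N W)\<^sup>+"
    and "k < N"
  shows "x k \<le> x r"
proof -
  define M where "M = Max (x ` {..<N})"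
  have x_le_M: "\<forall>k<N. x k \<le> M" unfolding M_def by simp
  obtain iM where iM: "iM < N" "x iM = M"
    using Max_in[of "x ` {..<N}"] r unfolding M_def by fastforce
  define S where "S = {i. i < N \<and> x i = M}"
  have edge_S: "a \<in> S" if "(a,b) \<in> digraph_edges N W" "b \<in> S" for a b
    using that harmonic_max_out_neighbour_eq[of N W b x a] W harm x_le_M
    unfolding S_def digraph_edges_def by auto
  have path_S: "a \<in> S" if "(a,b) \<in> (digraph_edges N W)\<^sup>+" "b \<in> S" for a b
    using that by (induction rule: trancl_induct) (auto intro: edge_S)
  have "r \<in> S"
    using path_S[of r iM] r iM unfolding S_def by (cases "iM = r") auto
  then show ?thesis using x_le_M \<open>k < N\<close> unfolding S_def by auto
qed

lemma harmonic_const_if_spanning_tree: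
  assumes W: "\<forall>i<N. \<forall>k<N. W $$ (i,k) \<ge> 0"
    and harm: "\<forall>i<N. laplacian_apply W N x i = 0"
    and tree: "has_spanning_tree N W"
    and "k < N" "l < N"
  shows "x k = x l"
proof -
  obtain r where r: "r < N" "\<forall>k<N. k \<noteq> r \<longrightarrow> (r,k) \<in> (digraph_edges N W)\<^sup>+"
    using tree unfolding has_spanning_tree_def by blast
  have "\<forall>i<N. laplacian_apply W N (\<lambda>k. - x k) i = 0"
    using harm by (simp add: laplacian_apply_uminus)
  then have "x k = x r" if "k < N" for k
    using harmonic_le_root[OF W harm r that] harmonic_le_root[OF W _ r that, of "\<lambda>k. - x k"]
    by fastforce
  then show ?thesis using assms(4,5) by simp
qed

lemma Delta_mat_dim [simp]: "dim_row (Delta_mat N) = N" "dim_col (Delta_mat N) = N"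
  unfolding Delta_mat_def by simp_all

lemma Delta_mat_mult_index_Suc:
  assumes A: "A \<in> carrier_mat N nc" and "Suc i < N" "c < nc"
  shows "(Delta_mat N * A) $$ (Suc i, c) = A $$ (0, c) - A $$ (Suc i, c)"
proof -
  have "(Delta_mat N * A) $$ (Suc i, c) = (\<Sum>a<N. Delta_mat N $$ (Suc i, a) * A $$ (a, c))"
    using assms by (simp add: carrier_matD scalar_prod_def atLeast0LessThan)
  also have "\<dots> = (\<Sum>a<N. (if a = 0 then A $$ (a, c) else 0) - (if a = Suc i then A $$ (a, c) else 0))"
    using assms by (intro sum.cong) (auto simp: Delta_mat_def)
  also have "\<dots> = A $$ (0, c) - A $$ (Suc i, c)"
    using assms by (simp add: sum_subtractf)
  finally show ?thesis .
qed

lemma mult_Delta_mat_index_Suc: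
  assumes A: "A \<in> carrier_mat nr N" and "r < nr" "Suc k < N"
  shows "(A * Delta_mat N) $$ (r, Suc k) = - A $$ (r, Suc k)"
proof -
  have "(A * Delta_mat N) $$ (r, Suc k) = (\<Sum>b<N. A $$ (r, b) * Delta_mat N $$ (b, Suc k))"
    using assms by (simp add: carrier_matD scalar_prod_def atLeast0LessThan)
  also have "\<dots> = (\<Sum>b<N. if b = Suc k then - A $$ (r, b) else 0)"
    using assms by (intro sum.cong) (auto simp: Delta_mat_def)
  finally show ?thesis using assms by simp
qed

lemma reduced_laplacian_carrier: "reduced_laplacian N L \<in> carrier_mat (N-1) (N-1)"
  unfolding reduced_laplacian_def Let_def by simp

lemma reduced_laplacian_index:
  assumes L: "L \<in> carrier_mat (Suc n) (Suc n)" and "i < n" "k < n"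
  shows "reduced_laplacian (Suc n) L $$ (i,k) = L $$ (Suc i, Suc k) - L $$ (0, Suc k)"
proof -
  have "(Delta_mat (Suc n) * L * Delta_mat (Suc n)) $$ (Suc i, Suc k)
      = - (Delta_mat (Suc n) * L) $$ (Suc i, Suc k)"
    using assms by (intro mult_Delta_mat_index_Suc) auto
  also have "\<dots> = L $$ (Suc i, Suc k) - L $$ (0, Suc k)"
    using assms Delta_mat_mult_index_Suc[OF L, of i "Suc k"] by simp
  finally show ?thesis using assms unfolding reduced_laplacian_def Let_def by simp
qed

definition prepend_zero :: "real vec \<Rightarrow> nat \<Rightarrow> real" where
  "prepend_zero v b = (if b = 0 then 0 else v $ (b - 1))"

lemma reduced_laplacian_mult_vec:
  assumes L: "L \<in> carrier_mat (Suc n) (Suc n)" and v: "v \<in> carrier_vec n" and "i < n"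
  defines "z \<equiv> vec (Suc n) (prepend_zero v)"
  shows "(reduced_laplacian (Suc n) L *\<^sub>v v) $ i = (L *\<^sub>v z) $ Suc i - (L *\<^sub>v z) $ 0"
proof -
  have "(reduced_laplacian (Suc n) L *\<^sub>v v) $ i
      = (\<Sum>k<n. L $$ (Suc i, Suc k) * v $ k - L $$ (0, Suc k) * v $ k)"
    using reduced_laplacian_carrier[of "Suc n" L] assms
    by (simp add: scalar_prod_def atLeast0LessThan reduced_laplacian_index left_diff_distrib)
  also have "\<dots> = (\<Sum>b<Suc n. L $$ (Suc i, b) * z $ b) - (\<Sum>b<Suc n. L $$ (0, b) * z $ b)"
    unfolding sum.lessThan_Suc_shift z_def by (simp add: prepend_zero_def sum_subtractf)
  also have "\<dots> = (L *\<^sub>v z) $ Suc i - (L *\<^sub>v z) $ 0"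
    using assms by (simp add: scalar_prod_def atLeast0LessThan z_def)
  finally show ?thesis .
qed

lemma laplacian_of_carrier:
  "W \<in> carrier_mat N N \<Longrightarrow> laplacian_of N W \<in> carrier_mat N N"
  unfolding laplacian_of_def by (intro minus_carrier_mat) auto

lemma laplacian_of_mult_vec:
  assumes W: "W \<in> carrier_mat N N" and "a < N"
  shows "(laplacian_of N W *\<^sub>v vec N x) $ a = laplacian_apply W N x a"
proof -
  have "(laplacian_of N W *\<^sub>v vec N x) $ a
      = (\<Sum>b<N. (if a = b then (\<Sum>k<N. W $$ (a,k)) * x b else 0) - W $$ (a,b) * x b)"
    using assms laplacian_of_carrier[OF W]
    by (simp add: scalar_prod_def atLeast0LessThan) (auto simp: laplacian_of_def algebra_simps intro: sum.cong)
  also have "\<dots> = (\<Sum>k<N. W $$ (a,k)) * x a - (\<Sum>b<N. W $$ (a,b) * x b)"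
    using assms by (simp add: sum_subtractf)
  also have "\<dots> = laplacian_apply W N x a"
    unfolding laplacian_apply_def by (simp add: sum_distrib_right sum_subtractf right_diff_distrib)
  finally show ?thesis .
qed

lemma laplacian_prepend_zero:
  assumes W: "W \<in> carrier_mat (Suc n) (Suc n)" and v: "v \<in> carrier_vec n" and "a < Suc n"
  shows "laplacian_apply W (Suc n) (prepend_zero v) a
       = prepend_zero (reduced_laplacian (Suc n) (laplacian_of (Suc n) W) *\<^sub>v v) a
         + laplacian_apply W (Suc n) (prepend_zero v) 0"
proof (cases a)
  case 0
  then show ?thesis by (simp add: prepend_zero_def)
next
  case (Suc i)
  then show ?thesis
    using reduced_laplacian_mult_vec[OF laplacian_of_carrier[OF W] v, of i]
      laplacian_of_mult_vec[OF W] assms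
    by (simp add: prepend_zero_def)
qed

lemma reduced_laplacian_kernel_harmonic:
  assumes W: "W \<in> carrier_mat (Suc n) (Suc n)"
    and nonneg: "\<forall>i<Suc n. \<forall>k<Suc n. W $$ (i,k) \<ge> 0"
  defines "R \<equiv> reduced_laplacian (Suc n) (laplacian_of (Suc n) W)"
  assumes v: "v \<in> mat_kernel R"
  shows "\<forall>a<Suc n. laplacian_apply W (Suc n) (prepend_zero v) a = 0"
proof -
  have "R \<in> carrier_mat n n"
    unfolding R_def using reduced_laplacian_carrier[of "Suc n"] by simp
  from mat_kernelD[OF this v] have v_carrier: "v \<in> carrier_vec n" and Rv: "R *\<^sub>v v = 0\<^sub>v n"
    by auto
  have "\<forall>a<Suc n. laplacian_apply W (Suc n) (prepend_zero v) a
                  = laplacian_apply W (Suc n) (prepend_zero v) 0"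
  proof (intro allI impI)
    fix a assume "a < Suc n"
    with laplacian_prepend_zero[OF W v_carrier this] Rv
    show "laplacian_apply W (Suc n) (prepend_zero v) a = laplacian_apply W (Suc n) (prepend_zero v) 0"
      unfolding R_def[symmetric] by (simp add: prepend_zero_def)
  qed
  from laplacian_apply_const[OF this]
  have "\<forall>a<Suc n. laplacian_apply W (Suc n) (laplacian_apply W (Suc n) (prepend_zero v)) a = 0"
    by blast
  then show ?thesis using laplacian_square_zero_imp_zero[OF nonneg] by blast
qed

lemma reduced_laplacian_square_kernel:
  assumes W: "W \<in> carrier_mat (Suc n) (Suc n)"
    and nonneg: "\<forall>i<Suc n. \<forall>k<Suc n. W $$ (i,k) \<ge> 0"
    and v: "v \<in> carrier_vec n"
  defines "R \<equiv> reduced_laplacian (Suc n) (laplacian_of (Suc n) W)"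
  assumes "R *\<^sub>v (R *\<^sub>v v) = 0\<^sub>v n"
  shows "R *\<^sub>v v = 0\<^sub>v n"
proof -
  have R: "R \<in> carrier_mat n n"
    unfolding R_def using reduced_laplacian_carrier[of "Suc n"] by simp
  then have "R *\<^sub>v v \<in> mat_kernel R" using assms by (intro mat_kernelI) auto
  then have Rv_harmonic: "\<forall>a<Suc n. laplacian_apply W (Suc n) (prepend_zero (R *\<^sub>v v)) a = 0"
    using reduced_laplacian_kernel_harmonic[OF W nonneg] unfolding R_def by blast
  have "laplacian_apply W (Suc n) (laplacian_apply W (Suc n) (prepend_zero v)) a
      = laplacian_apply W (Suc n) (prepend_zero (R *\<^sub>v v)) a" if "a < Suc n" for a
    using laplacian_apply_shift[OF _ that] laplacian_prepend_zero[OF W v]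
    unfolding R_def by blast
  with Rv_harmonic have harmonic: "\<forall>a<Suc n. laplacian_apply W (Suc n) (prepend_zero v) a = 0"
    using laplacian_square_zero_imp_zero[OF nonneg] by simp
  show ?thesis
  proof (rule eq_vecI)
    fix i assume "i < dim_vec (0\<^sub>v n)"
    then show "(R *\<^sub>v v) $ i = 0\<^sub>v n $ i"
      using laplacian_prepend_zero[OF W v, of "Suc i"] harmonic
      unfolding R_def by (simp add: prepend_zero_def)
  qed (use R in simp)
qed

lemma Eig_reduced_laplacian_subset_mat_kernel:
  assumes W: "W \<in> carrier_mat (Suc n) (Suc n)"
    and nonneg: "\<forall>i<Suc n. \<forall>k<Suc n. W $$ (i,k) \<ge> 0"
  defines "R \<equiv> reduced_laplacian (Suc n) (laplacian_of (Suc n) W)"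
  shows "Eig R \<subseteq> mat_kernel R"
proof -
  have R: "R \<in> carrier_mat n n"
    unfolding R_def using reduced_laplacian_carrier[of "Suc n"] by simp
  have "{v. gen_eigenvector R 0 v} \<subseteq> mat_kernel R"
    using gen_eigenvector_0_mat_kernel[OF R] reduced_laplacian_square_kernel[OF W nonneg]
    unfolding R_def by blast
  then show ?thesis
    unfolding Eig_def using vec_span_subset_mat_kernel[OF R] R by auto
qed

lemma adjacency_of_laplacian_sum:
  assumes "\<forall>j<m. is_adjacency N (W j)"
  shows "adjacency_of_laplacian N (mat N N (\<lambda>(i,k). \<Sum>j<m. laplacian_of N (W j) $$ (i,k)))
       = mat N N (\<lambda>(i,k). \<Sum>j<m. W j $$ (i,k))"
proof (rule eq_matI)
  fix i k assume "i < dim_row (mat N N (\<lambda>(i,k). \<Sum>j<m. W j $$ (i,k)))"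
    "k < dim_col (mat N N (\<lambda>(i,k). \<Sum>j<m. W j $$ (i,k)))"
  then have ik: "i < N" "k < N" by auto
  have "laplacian_of N (W j) $$ (i,k) = - W j $$ (i,k)" if "j < m" "i \<noteq> k" for j
    using assms ik that unfolding is_adjacency_def laplacian_of_def by auto
  moreover have "(\<Sum>j<m. W j $$ (i,i)) = 0"
    using assms ik unfolding is_adjacency_def by simp
  ultimately show "adjacency_of_laplacian N (mat N N (\<lambda>(i,k). \<Sum>j<m. laplacian_of N (W j) $$ (i,k))) $$ (i,k)
       = mat N N (\<lambda>(i,k). \<Sum>j<m. W j $$ (i,k)) $$ (i,k)"
    using ik unfolding adjacency_of_laplacian_def by (cases "i = k") (simp_all add: sum_negf)
qed (auto simp: adjacency_of_laplacian_def)

lemma has_spanning_tree_imp_edge: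
  assumes "2 \<le> N" "has_spanning_tree N W"
  shows "\<exists>i<N. \<exists>k<N. W $$ (i,k) > 0"
proof -
  obtain r where r: "r < N" "\<forall>k<N. k \<noteq> r \<longrightarrow> (r,k) \<in> (digraph_edges N W)\<^sup>+"
    using assms(2) unfolding has_spanning_tree_def by blast
  define k :: nat where "k = (if r = 0 then 1 else 0)"
  have "k < N" "k \<noteq> r" using assms(1) unfolding k_def by auto
  then have "(r,k) \<in> (digraph_edges N W)\<^sup>+" using r by blast
  then obtain l where "(r,l) \<in> digraph_edges N W" by (metis tranclD)
  then show ?thesis unfolding digraph_edges_def by auto
qed

lemma prepend_zero_harmonic_eq_0:
  assumes "\<forall>i<Suc n. \<forall>k<Suc n. A $$ (i,k) \<ge> 0" "has_spanning_tree (Suc n) A"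
    and "\<forall>i<Suc n. laplacian_apply A (Suc n) (prepend_zero y) i = 0"
    and "y \<in> carrier_vec n"
  shows "y = 0\<^sub>v n"
proof (rule eq_vecI)
  fix i assume "i < dim_vec (0\<^sub>v n)"
  then have "prepend_zero y (Suc i) = prepend_zero y 0"
    using harmonic_const_if_spanning_tree[OF assms(1) assms(3) assms(2)] by simp
  then show "y $ i = 0\<^sub>v n $ i" using \<open>i < dim_vec (0\<^sub>v n)\<close> by (simp add: prepend_zero_def)
qed (use assms(4) in simp)

lemma Inter_mat_kernel_reduced_laplacian_subset:
  fixes m :: nat
  assumes "m \<noteq> 0"
    and W: "\<And>j. j < m \<Longrightarrow> W j \<in> carrier_mat (Suc n) (Suc n)"
    and nonneg: "\<And>j. j < m \<Longrightarrow> \<forall>i<Suc n. \<forall>k<Suc n. W j $$ (i,k) \<ge> 0"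
    and tree: "has_spanning_tree (Suc n) (mat (Suc n) (Suc n) (\<lambda>(i,k). \<Sum>j<m. W j $$ (i,k)))"
  shows "(\<Inter>j<m. mat_kernel (reduced_laplacian (Suc n) (laplacian_of (Suc n) (W j)))) \<subseteq> {0\<^sub>v n}"
proof
  fix y assume "y \<in> (\<Inter>j<m. mat_kernel (reduced_laplacian (Suc n) (laplacian_of (Suc n) (W j))))"
  then have kernel: "y \<in> mat_kernel (reduced_laplacian (Suc n) (laplacian_of (Suc n) (W j)))"
    if "j < m" for j
    using that by simp
  have "reduced_laplacian (Suc n) (laplacian_of (Suc n) (W 0)) \<in> carrier_mat n n"
    using reduced_laplacian_carrier[of "Suc n"] by simp
  moreover have "0 < m" using \<open>m \<noteq> 0\<close> by simp
  ultimately have carrier: "y \<in> carrier_vec n" using mat_kernelD(1) kernel by blast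
  have "\<forall>i<Suc n. laplacian_apply (W j) (Suc n) (prepend_zero y) i = 0" if "j < m" for j
    using reduced_laplacian_kernel_harmonic[OF W[OF that] nonneg[OF that] kernel[OF that]] .
  then have harmonic: "\<forall>i<Suc n. laplacian_apply (mat (Suc n) (Suc n) (\<lambda>(i,k). \<Sum>j<m. W j $$ (i,k)))
                (Suc n) (prepend_zero y) i = 0"
    by (simp add: laplacian_apply_sum)
  have "\<forall>i<Suc n. \<forall>k<Suc n. mat (Suc n) (Suc n) (\<lambda>(i,k). \<Sum>j<m. W j $$ (i,k)) $$ (i,k) \<ge> 0"
    using nonneg by (auto intro!: sum_nonneg)
  from prepend_zero_harmonic_eq_0[OF this tree harmonic carrier] show "y \<in> {0\<^sub>v n}" by simp
qed

theorem lemma7: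
  fixes N m :: nat and L :: "nat \<Rightarrow> real mat"
  assumes "N \<ge> 2"
    and "\<And>j. j < m \<Longrightarrow> is_laplacian N (L j)"
    and "has_spanning_tree N
           (adjacency_of_laplacian N (mat N N (\<lambda>(i,k). \<Sum>j<m. L j $$ (i,k))))"
  shows "(\<Inter>j\<in>{..<m}. Eig (reduced_laplacian N (L j))) = {0\<^sub>v (N-1)}"
proof -
  obtain n where N: "N = Suc n" using assms(1) by (cases N) auto
  obtain W where W: "\<forall>j<m. is_adjacency N (W j) \<and> L j = laplacian_of N (W j)"
    using assms(2) unfolding is_laplacian_def by metis
  then have W_carrier: "W j \<in> carrier_mat (Suc n) (Suc n)"
    and W_nonneg: "\<forall>i<Suc n. \<forall>k<Suc n. W j $$ (i,k) \<ge> 0" if "j < m" for j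
    using that unfolding is_adjacency_def N by auto
  have "mat N N (\<lambda>(i,k). \<Sum>j<m. L j $$ (i,k)) = mat N N (\<lambda>(i,k). \<Sum>j<m. laplacian_of N (W j) $$ (i,k))"
    using W by (intro cong_mat refl) (simp add: case_prod_beta)
  then have tree: "has_spanning_tree N (mat N N (\<lambda>(i,k). \<Sum>j<m. W j $$ (i,k)))"
    using assms(3) adjacency_of_laplacian_sum[of m N W] W by simp
  \<comment> \<open>for m = 0 the intersection would be all of UNIV\<close>
  then have "m \<noteq> 0" using has_spanning_tree_imp_edge[OF assms(1) tree] by (cases "m = 0") auto
  have "(\<Inter>j<m. Eig (reduced_laplacian N (L j)))
      \<subseteq> (\<Inter>j<m. mat_kernel (reduced_laplacian (Suc n) (laplacian_of (Suc n) (W j))))"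
    using Eig_reduced_laplacian_subset_mat_kernel[OF W_carrier W_nonneg] W N
    by (intro INF_superset_mono) auto
  also have "\<dots> \<subseteq> {0\<^sub>v n}"
    using Inter_mat_kernel_reduced_laplacian_subset[OF \<open>m \<noteq> 0\<close> W_carrier W_nonneg] tree N by simp
  finally have "(\<Inter>j<m. Eig (reduced_laplacian N (L j))) \<subseteq> {0\<^sub>v n}" .
  moreover have "0\<^sub>v n \<in> Eig (reduced_laplacian N (L j))" for j
    using zero_mem_Eig[of "reduced_laplacian N (L j)"] carrier_matD(1)[OF reduced_laplacian_carrier] N
    by simp
  ultimately show ?thesis using N by auto
qed

end
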